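(* Let $m\ge3$ and let $\lambda\colon[m]\to\mathbb{Z}_2^2$ be a $\mathbb{Z}_2$-characteristic map over $P_m$. Then $\lambda$ is real toric (i.e. the small cover $M(\lambda)$ is a real toric manifold) if and only if either $m=4$ and $\lambda$ is D-J equivalent to $\mathbf a\mathbf b\mathbf a\mathbf b$, or the image of $\lambda$ has exactly three elements. Equivalently, $\lambda$ is real toric unless $\lambda$ is D-J equivalent to $\Lambda_{2k}=\mathbf a\mathbf b\mathbf a\mathbf b\cdots\mathbf a\mathbf b$ (length $2k=m$) with $k\ge3$.
   Context: $P_m$ is the simplicial complex on $[m]$ with facets $\{i,i+1\}$ mod $m$. $\mathbf a=(1,0)^T$, $\mathbf b=(0,1)^T$, $\mathbf c=(1,1)^T$; a $\mathbb{Z}_2$-characteristic map over $P_m$ is a map $\lambda\colon[m]\to\{\mathbf a,\mathbf b,\mathbf c\}$ with $\lambda(i)\ne\lambda(i+1)$ mod $m$, written as a cyclic word; D-J equivalence is composition with an element of $GL(2,\mathbb{Z}_2)$. $\lambda$ is called real toric if there is a complete non-singular fan in $\mathbb{R}^2$ with exactly $m$ rays whose primitive generators $v_1,\dots,v_m\in\mathbb{Z}^2$, listed in cyclic (counterclockwise) order, satisfy: $i\mapsto v_i\bmod 2$ is D-J equivalent to $\lambda$. *)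

theory Defs
  imports "HOL-Analysis.Analysis"
begin

text \<open>Vectors of Z_2^2 are modelled as pairs of booleans (True = 1, False = 0,
  addition = exclusive or). The vertex set [m] of P_m is indexed by 0..m-1,
  and the successor of i is (i+1) mod m.\<close>

type_synonym z2vec = "bool \<times> bool"

definition va :: z2vec where "va = (True, False)"
definition vb :: z2vec where "vb = (False, True)"
definition vc :: z2vec where "vc = (True, True)"

definition char_map :: "nat \<Rightarrow> (nat \<Rightarrow> z2vec) \<Rightarrow> bool" where
  "char_map m lam \<longleftrightarrow>
     (\<forall>i<m. lam i \<in> {va, vb, vc}) \<and> (\<forall>i<m. lam i \<noteq> lam (Suc i mod m))"

definition z2lin :: "bool \<Rightarrow> bool \<Rightarrow> bool \<Rightarrow> bool \<Rightarrow> z2vec \<Rightarrow> z2vec" where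
  "z2lin p q r s x = ((p \<and> fst x) \<noteq> (q \<and> snd x), (r \<and> fst x) \<noteq> (s \<and> snd x))"

text \<open>Elements of GL(2,Z_2): linear maps whose determinant ps - qr is 1.\<close>
definition GL2Z2 :: "(z2vec \<Rightarrow> z2vec) set" where
  "GL2Z2 = {z2lin p q r s | p q r s. (p \<and> s) \<noteq> (q \<and> r)}"

definition dj_equiv :: "nat \<Rightarrow> (nat \<Rightarrow> z2vec) \<Rightarrow> (nat \<Rightarrow> z2vec) \<Rightarrow> bool" where
  "dj_equiv m lam mu \<longleftrightarrow> (\<exists>g\<in>GL2Z2. \<forall>i<m. mu i = g (lam i))"

definition mod2 :: "int \<times> int \<Rightarrow> z2vec" where
  "mod2 v = (odd (fst v), odd (snd v))"

definition det2 :: "int \<times> int \<Rightarrow> int \<times> int \<Rightarrow> int" where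
  "det2 v w = fst v * snd w - snd v * fst w"

definition of_iv :: "int \<times> int \<Rightarrow> real \<times> real" where
  "of_iv v = (real_of_int (fst v), real_of_int (snd v))"

definition cone2 :: "real \<times> real \<Rightarrow> real \<times> real \<Rightarrow> (real \<times> real) set" where
  "cone2 u w = {s *\<^sub>R u + t *\<^sub>R w | s t. s \<ge> 0 \<and> t \<ge> 0}"

text \<open>v_0,...,v_{m-1} are the primitive ray generators, in counterclockwise cyclic
  order, of a complete non-singular fan in R^2 with exactly m rays. The 2-dimensional
  cones are cone(v_i, v_{i+1}); non-singularity together with the counterclockwise
  order means det(v_i, v_{i+1}) = 1; the fan condition is that distinct maximal cones
  have disjoint interiors (so they meet in a common face); completeness is that
  the cones cover R^2.\<close>
definition complete_nonsingular_fan2 :: "nat \<Rightarrow> (nat \<Rightarrow> int \<times> int) \<Rightarrow> bool" where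
  "complete_nonsingular_fan2 m v \<longleftrightarrow>
     (\<forall>i<m. coprime (fst (v i)) (snd (v i))) \<and>
     inj_on v {..<m} \<and>
     (\<forall>i<m. det2 (v i) (v (Suc i mod m)) = 1) \<and>
     (\<Union>i<m. cone2 (of_iv (v i)) (of_iv (v (Suc i mod m)))) = UNIV \<and>
     (\<forall>i<m. \<forall>j<m. i \<noteq> j \<longrightarrow>
        interior (cone2 (of_iv (v i)) (of_iv (v (Suc i mod m)))) \<inter>
        interior (cone2 (of_iv (v j)) (of_iv (v (Suc j mod m)))) = {})"

definition real_toric :: "nat \<Rightarrow> (nat \<Rightarrow> z2vec) \<Rightarrow> bool" where
  "real_toric m lam \<longleftrightarrow>
     (\<exists>v. complete_nonsingular_fan2 m v \<and> dj_equiv m lam (\<lambda>i. mod2 (v i)))"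

definition alt_ab :: "nat \<Rightarrow> z2vec" where
  "alt_ab i = (if even i then va else vb)"

end

theory Submission
  imports Defs
begin

text \<open>
  Consecutive rays v_k, v_(k+1) of a complete non-singular fan in the plane have determinant 1,
  hence v_(k-1) + v_(k+1) = a_k v_k with a_k = det(v_(k-1), v_(k+1)).

  If the characteristic map takes three values, some vertex has neighbours of different colours
  and a colour that also occurs elsewhere. Deleting it leaves a characteristic map with three
  colours on one vertex less, realised by a fan by induction; inserting the sum of the two
  neighbouring rays (a star subdivision) realises the original map, because the colour of the
  deleted vertex is forced to be the sum of the two neighbouring colours. The induction starts from
  the fan (1,0), (0,1), (-1,-1); the word abab is realised by the four coordinate rays.

  If the map is equivalent to abab...ab of length at least 6, then v_(k-1) = v_(k+1) and v_k is
  nonzero modulo 2, so every a_k is even. At a longest ray this forces v_(k-1) = -v_(k+1). All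
  other rays then lie strictly on one side of the line through v_(k+1); their heights above it
  vanish at both ends, are positive in between and satisfy h_(i-1) + h_(i+1) = a h_i with even a,
  which is impossible at the first maximum of h.
\<close>

section \<open>Cones in the plane\<close>

definition det2r :: "real \<times> real \<Rightarrow> real \<times> real \<Rightarrow> real" where
  "det2r x y = fst x * snd y - snd x * fst y"

definition open_cone2 :: "real \<times> real \<Rightarrow> real \<times> real \<Rightarrow> (real \<times> real) set" where
  "open_cone2 u w = {x. 0 < det2r x w \<and> 0 < det2r u x}"

lemma det2r_add_left: "det2r (x + y) z = det2r x z + det2r y z"
  and det2r_add_right: "det2r z (x + y) = det2r z x + det2r z y"
  and det2r_scaleR_left: "det2r (c *\<^sub>R x) z = c * det2r x z"
  and det2r_scaleR_right: "det2r z (c *\<^sub>R x) = c * det2r z x"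
  and det2r_minus_right: "det2r z (- x) = - det2r z x"
  and det2r_self: "det2r x x = 0"
  and det2r_commute: "det2r y x = - det2r x y"
  by (simp_all add: det2r_def algebra_simps)

lemmas det2r_simps = det2r_add_left det2r_add_right det2r_scaleR_left det2r_scaleR_right
  det2r_minus_right det2r_self

lemma of_iv_add: "of_iv (a + b) = of_iv a + of_iv b"
  and of_iv_minus: "of_iv (- a) = - of_iv a"
  by (simp_all add: of_iv_def)

lemma det2r_of_iv [simp]: "det2r (of_iv a) (of_iv b) = of_int (det2 a b)"
  by (simp add: det2r_def of_iv_def det2_def)

lemma det2r_eq_1_nonzero:
  assumes "det2r u w = 1" shows "u \<noteq> 0" "w \<noteq> 0"
  using assms by (auto simp: det2r_def)

lemma cone2_iff:
  assumes "det2r u w = 1"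
  shows "x \<in> cone2 u w \<longleftrightarrow> 0 \<le> det2r x w \<and> 0 \<le> det2r u x"
proof
  assume "x \<in> cone2 u w"
  then show "0 \<le> det2r x w \<and> 0 \<le> det2r u x"
    using assms by (auto simp: cone2_def det2r_simps det2r_commute[of w u])
next
  assume "0 \<le> det2r x w \<and> 0 \<le> det2r u x"
  moreover have "x = det2r x w *\<^sub>R u + det2r u x *\<^sub>R w"
  proof -
    obtain a b c d e f where "x = (a, b)" "u = (c, d)" "w = (e, f)"
      by (metis prod.exhaust)
    moreover have "a = a * (c * f - d * e)" "b = b * (c * f - d * e)"
      using assms \<open>u = (c, d)\<close> \<open>w = (e, f)\<close> by (simp_all add: det2r_def)
    ultimately show ?thesis
      by (simp add: det2r_def algebra_simps)
  qed
  ultimately show "x \<in> cone2 u w"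
    unfolding cone2_def by blast
qed

lemma interior_cone2:
  assumes "det2r u w = 1"
  shows "interior (cone2 u w) = open_cone2 u w"
proof -
  have "det2r x w = (snd w, - fst w) \<bullet> x" "det2r u x = (- snd u, fst u) \<bullet> x" for x
    by (simp_all add: det2r_def inner_prod_def algebra_simps)
  moreover have "(snd w, - fst w) \<noteq> 0" "(- snd u, fst u) \<noteq> 0"
    using det2r_eq_1_nonzero[OF assms] by (auto simp: zero_prod_def prod_eq_iff)
  moreover have "cone2 u w = {x. 0 \<le> (snd w, - fst w) \<bullet> x} \<inter> {x. 0 \<le> (- snd u, fst u) \<bullet> x}"
    using cone2_iff[OF assms] calculation(1,2) by auto
  ultimately show ?thesis
    by (simp add: open_cone2_def Collect_conj_eq)
qed

lemma open_cone2_subdivide: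
  "open_cone2 u (u + w) \<subseteq> open_cone2 u w"
  "open_cone2 (u + w) w \<subseteq> open_cone2 u w"
  "open_cone2 u (u + w) \<inter> open_cone2 (u + w) w = {}"
  by (auto simp: open_cone2_def det2r_def algebra_simps)

lemma cone2_subdivide:
  assumes "det2r u w = 1"
  shows "cone2 u w \<subseteq> cone2 u (u + w) \<union> cone2 (u + w) w"
proof -
  have "det2r u (u + w) = 1" "det2r (u + w) w = 1"
    using assms by (simp_all add: det2r_simps det2r_commute[of w u])
  then show ?thesis
    using assms by (auto simp: cone2_iff det2r_def algebra_simps)
qed

lemma eventually_affine_pos:
  fixes a b :: real
  assumes "0 < a"
  shows "eventually (\<lambda>t. 0 < a + t * b) (at_right 0)"
proof -
  have "((\<lambda>t. a + t * b) \<longlongrightarrow> a + 0 * b) (at_right 0)"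
    by (intro tendsto_intros)
  then show ?thesis
    using assms by (simp add: order_tendstoD(1))
qed

lemma eventually_affine_nonzero:
  fixes a b :: real
  assumes "a \<noteq> 0 \<or> b \<noteq> 0"
  shows "eventually (\<lambda>t. a + t * b \<noteq> 0) (at_right 0)"
proof (cases "a = 0")
  case True
  then show ?thesis
    using assms by (auto intro: eventually_mono[OF eventually_at_right_less])
next
  case False
  have "((\<lambda>t. a + t * b) \<longlongrightarrow> a + 0 * b) (at_right 0)"
    by (intro tendsto_intros)
  then show ?thesis
    using False by (intro tendsto_imp_eventually_ne) simp_all
qed

section \<open>Cyclic indices\<close>

lemma rotate_mod_inj:
  fixes m :: nat
  assumes "x < m" "y < m" "(x + s) mod m = (y + s) mod m"
  shows "x = y"
proof -
  have "(int x + int s) mod int m = (int y + int s) mod int m"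
    using assms(3) by (metis of_nat_add zmod_int)
  then have "int x mod int m = int y mod int m"
    by (metis add_diff_cancel_right' mod_diff_left_eq)
  then show ?thesis
    using assms(1,2) by simp
qed

lemma rotate_mod_Suc: "(Suc k mod m + s) mod m = Suc ((k + s) mod m) mod (m :: nat)"
  by (metis add_Suc mod_Suc_eq mod_add_left_eq)

lemma rotate_mod_image: "0 < m \<Longrightarrow> (\<lambda>k. (k + s) mod m) ` {..<m} = {..<(m :: nat)}"
  by (rule endo_inj_surj) (auto intro: inj_onI rotate_mod_inj)

lemma rotate_mod_image_remove:
  assumes "i < Suc m"
  shows "(\<lambda>k. (k + Suc i) mod Suc m) ` {..<m} = {..<Suc m} - {i}"
proof -
  let ?r = "\<lambda>k. (k + Suc i) mod Suc m"
  have "inj_on ?r {..<Suc m}"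
    by (rule inj_onI, rule rotate_mod_inj[where s = "Suc i"]) auto
  have "m + Suc i = i + Suc m"
    by simp
  then have last: "?r ` {m} = {i}"
    by (simp only: image_insert image_empty mod_add_self2 mod_less[OF assms])
  have "{..<m} = {..<Suc m} - {m}"
    by auto
  also have "?r ` ({..<Suc m} - {m}) = ?r ` {..<Suc m} - ?r ` {m}"
    using \<open>inj_on ?r {..<Suc m}\<close> by (rule inj_on_image_set_diff) auto
  also have "?r ` {..<Suc m} = {..<Suc m}"
    by (rule rotate_mod_image) simp
  finally show ?thesis
    by (simp only: last)
qed

lemma fun_upd_last_consecutive_cases:
  assumes "0 < m" "i < Suc m"
  obtains "i < m - 1" "(v(m := p)) i = v i" "(v(m := p)) (Suc i mod Suc m) = v (Suc i mod m)"
  | "i = m - 1" "(v(m := p)) i = v (m - 1)" "(v(m := p)) (Suc i mod Suc m) = p"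
  | "i = m" "(v(m := p)) i = p" "(v(m := p)) (Suc i mod Suc m) = v 0"
proof -
  consider "i < m - 1" | "i = m - 1" | "i = m"
    using assms by arith
  then show thesis
  proof cases
    case 1
    then have "i \<noteq> m" "Suc i \<noteq> m" "Suc i mod Suc m = Suc i" "Suc i mod m = Suc i"
      by auto
    then show thesis
      using 1 that(1) by simp
  next
    case 2
    then have "i \<noteq> m" "Suc i mod Suc m = m"
      using assms(1) by simp_all
    then show thesis
      using 2 that(2) by simp
  qed (use assms(1) that(3) in simp)
qed

definition cyc_succ :: "nat \<Rightarrow> nat \<Rightarrow> nat" where
  "cyc_succ n i = Suc i mod n"

definition cyc_pred :: "nat \<Rightarrow> nat \<Rightarrow> nat" where
  "cyc_pred n i = (i + n - 1) mod n"

lemma cyc_succ_eq: "i < n \<Longrightarrow> cyc_succ n i = (if Suc i = n then 0 else Suc i)"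
  by (cases "Suc i = n") (simp_all add: cyc_succ_def)

lemma cyc_pred_eq: "i < n \<Longrightarrow> cyc_pred n i = (if i = 0 then n - 1 else i - 1)"
  by (cases i) (simp_all add: cyc_pred_def)

lemma cyc_succ_less: "0 < n \<Longrightarrow> cyc_succ n i < n"
  and cyc_pred_less: "0 < n \<Longrightarrow> cyc_pred n i < n"
  by (simp_all add: cyc_succ_def cyc_pred_def)

lemma cyc_succ_pred: "i < n \<Longrightarrow> cyc_succ n (cyc_pred n i) = i"
  and cyc_pred_succ: "i < n \<Longrightarrow> cyc_pred n (cyc_succ n i) = i"
  using cyc_pred_less[of n i] cyc_succ_less[of n i] by (auto simp: cyc_succ_eq cyc_pred_eq)

lemma cyc_neighbours_distinct:
  assumes "4 \<le> n" "i < n"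
  shows "cyc_succ n i \<noteq> i" "cyc_succ n (cyc_succ n i) \<noteq> i"
    "cyc_succ n (cyc_succ n i) \<noteq> cyc_pred n i" "cyc_pred n (cyc_pred n i) \<noteq> i"
  using assms cyc_succ_less[of n i] cyc_pred_less[of n i] by (auto simp: cyc_succ_eq cyc_pred_eq)

lemma less_3_cases:
  assumes "i < (3 :: nat)" obtains "i = 0" | "i = 1" | "i = 2"
  using assms by linarith

lemma less_4_cases:
  assumes "i < (4 :: nat)" obtains "i = 0" | "i = 1" | "i = 2" | "i = 3"
  using assms by linarith

section \<open>Complete non-singular fans\<close>

definition fan_open_cone :: "nat \<Rightarrow> (nat \<Rightarrow> int \<times> int) \<Rightarrow> nat \<Rightarrow> (real \<times> real) set" where
  "fan_open_cone m v i = open_cone2 (of_iv (v i)) (of_iv (v (Suc i mod m)))"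

lemma det2_eq_1_coprime:
  assumes "det2 u w = 1"
  shows "coprime (fst u) (snd u)"
proof (rule coprimeI)
  fix c assume "c dvd fst u" "c dvd snd u"
  then have "c dvd det2 u w" by (simp add: det2_def)
  then show "is_unit c" using assms by simp
qed

lemma complete_nonsingular_fan2I:
  assumes inj: "inj_on v {..<m}"
    and det: "\<And>i. i < m \<Longrightarrow> det2 (v i) (v (Suc i mod m)) = 1"
    and cover: "\<And>x. \<exists>i<m. x \<in> cone2 (of_iv (v i)) (of_iv (v (Suc i mod m)))"
    and disjoint: "\<And>i j. i < m \<Longrightarrow> j < m \<Longrightarrow> i \<noteq> j \<Longrightarrow> fan_open_cone m v i \<inter> fan_open_cone m v j = {}"
  shows "complete_nonsingular_fan2 m v"
  unfolding complete_nonsingular_fan2_def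
proof (intro conjI allI impI)
  show "(\<Union>i<m. cone2 (of_iv (v i)) (of_iv (v (Suc i mod m)))) = UNIV"
    using cover by blast
  fix i j assume "i < m" "j < m" "i \<noteq> j"
  then show "interior (cone2 (of_iv (v i)) (of_iv (v (Suc i mod m)))) \<inter>
      interior (cone2 (of_iv (v j)) (of_iv (v (Suc j mod m)))) = {}"
    using disjoint det by (simp add: interior_cone2 fan_open_cone_def)
qed (use inj det det2_eq_1_coprime in blast)+

lemma fan_pos:
  assumes "complete_nonsingular_fan2 m v"
  shows "0 < m"
  using assms by (auto simp: complete_nonsingular_fan2_def)

lemma fan_det:
  assumes "complete_nonsingular_fan2 m v" "i < m"
  shows "det2 (v i) (v (Suc i mod m)) = 1"
  using assms by (simp add: complete_nonsingular_fan2_def)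

lemma fan_det_mod:
  assumes "complete_nonsingular_fan2 m v"
  shows "det2 (v (k mod m)) (v (Suc k mod m)) = 1"
proof -
  have "k mod m < m" "Suc (k mod m) mod m = Suc k mod m"
    using fan_pos[OF assms] by (simp_all add: mod_Suc_eq)
  then show ?thesis
    using assms unfolding complete_nonsingular_fan2_def by metis
qed

lemma fan_cover:
  assumes "complete_nonsingular_fan2 m v"
  obtains i where "i < m" "x \<in> cone2 (of_iv (v i)) (of_iv (v (Suc i mod m)))"
  using assms unfolding complete_nonsingular_fan2_def by blast

lemma fan_open_cones_disjoint:
  assumes "complete_nonsingular_fan2 m v" "i < m" "j < m" "i \<noteq> j"
  shows "fan_open_cone m v i \<inter> fan_open_cone m v j = {}"
proof -
  have "interior (cone2 (of_iv (v i)) (of_iv (v (Suc i mod m)))) \<inter>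
      interior (cone2 (of_iv (v j)) (of_iv (v (Suc j mod m)))) = {}"
    using assms unfolding complete_nonsingular_fan2_def by blast
  then show ?thesis
    using fan_det[OF assms(1,2)] fan_det[OF assms(1,3)]
    by (simp add: interior_cone2 fan_open_cone_def)
qed

lemma fan_shifted_ray_in_open_cone:
  assumes "complete_nonsingular_fan2 m v" "k < m" "0 < t"
  shows "of_iv (v k) + t *\<^sub>R of_iv (v (Suc k mod m)) \<in> fan_open_cone m v k"
  using assms fan_det[OF assms(1,2)]
  by (simp add: fan_open_cone_def open_cone2_def det2r_simps det2r_commute[of _ "of_iv (v k)"])

lemma fan_rotate:
  assumes fan: "complete_nonsingular_fan2 m v"
  shows "complete_nonsingular_fan2 m (\<lambda>k. v ((k + s) mod m))"
proof (rule complete_nonsingular_fan2I)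
  have m: "0 < m" by (rule fan_pos[OF fan])
  show "inj_on (\<lambda>k. v ((k + s) mod m)) {..<m}"
  proof (rule inj_onI)
    fix x y assume "x \<in> {..<m}" "y \<in> {..<m}" "v ((x + s) mod m) = v ((y + s) mod m)"
    moreover have "inj_on v {..<m}"
      using fan by (simp add: complete_nonsingular_fan2_def)
    ultimately have "(x + s) mod m = (y + s) mod m"
      using m by (auto dest: inj_onD)
    then show "x = y"
      using \<open>x \<in> {..<m}\<close> \<open>y \<in> {..<m}\<close> rotate_mod_inj by blast
  qed
  show "det2 (v ((i + s) mod m)) (v ((Suc i mod m + s) mod m)) = 1" for i
    unfolding rotate_mod_Suc using fan_det_mod[OF fan, of "(i + s) mod m"] by simp
  show "\<exists>i<m. x \<in> cone2 (of_iv (v ((i + s) mod m))) (of_iv (v ((Suc i mod m + s) mod m)))" for x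
  proof -
    obtain j where "j < m" "x \<in> cone2 (of_iv (v j)) (of_iv (v (Suc j mod m)))"
      using fan_cover[OF fan] .
    moreover have "j \<in> (\<lambda>k. (k + s) mod m) ` {..<m}"
      using \<open>j < m\<close> rotate_mod_image[OF m, of s] by simp
    then obtain i where "i < m" "j = (i + s) mod m"
      by blast
    ultimately show ?thesis
      unfolding rotate_mod_Suc by blast
  qed
  have rotated_cone: "fan_open_cone m (\<lambda>k. v ((k + s) mod m)) i = fan_open_cone m v ((i + s) mod m)" for i
    unfolding fan_open_cone_def rotate_mod_Suc ..
  show "fan_open_cone m (\<lambda>k. v ((k + s) mod m)) i \<inter> fan_open_cone m (\<lambda>k. v ((k + s) mod m)) j = {}"
    if "i < m" "j < m" "i \<noteq> j" for i j
    unfolding rotated_cone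
    using that rotate_mod_inj[of i m j s] by (intro fan_open_cones_disjoint[OF fan] mod_less_divisor m) auto
qed

lemma fan_last_det:
  assumes "complete_nonsingular_fan2 m v"
  shows "det2 (v (m - 1)) (v 0) = 1"
  using fan_det_mod[OF assms, of "m - 1"] fan_pos[OF assms] by simp

lemma fan_sum_not_ray:
  assumes fan: "complete_nonsingular_fan2 m v" and "k < m"
  shows "v (m - 1) + v 0 \<noteq> v k"
proof
  assume sum: "v (m - 1) + v 0 = v k"
  define U W where "U = of_iv (v (m - 1))" and "W = of_iv (v 0)"
  have UW: "det2r U W = 1"
    using fan_last_det[OF fan] by (simp add: U_def W_def)
  show False
  proof (cases "k = m - 1")
    case True
    then show False
      using sum UW by (simp add: W_def of_iv_def det2r_def)
  next
    case False
    define q where "q = of_iv (v (Suc k mod m))"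
    have "eventually (\<lambda>t. 0 < t \<and> 0 < 1 + t * det2r q W \<and> 0 < 1 + t * det2r U q) (at_right 0)"
      by (intro eventually_conj eventually_at_right_less eventually_affine_pos) simp_all
    then obtain t where t: "0 < t" "0 < 1 + t * det2r q W" "0 < 1 + t * det2r U q"
      using eventually_happens'[OF trivial_limit_at_right_real] by blast
    have "of_iv (v k) = U + W"
      by (simp add: U_def W_def sum[symmetric] of_iv_add)
    then have "of_iv (v k) + t *\<^sub>R q \<in> fan_open_cone m v (m - 1)"
      using fan t UW fan_pos[OF fan]
      by (simp add: fan_open_cone_def open_cone2_def det2r_simps det2r_commute[of W U] U_def W_def)
    moreover have "of_iv (v k) + t *\<^sub>R q \<in> fan_open_cone m v k"
      unfolding q_def by (rule fan_shifted_ray_in_open_cone[OF fan \<open>k < m\<close> t(1)])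
    ultimately show False
      using fan_open_cones_disjoint[OF fan, of k "m - 1"] \<open>k < m\<close> False by auto
  qed
qed

lemma fan_subdivide_last:
  assumes fan: "complete_nonsingular_fan2 m v" and m: "3 \<le> m"
  shows "complete_nonsingular_fan2 (Suc m) (v(m := v (m - 1) + v 0))"
    (is "complete_nonsingular_fan2 _ ?v")
proof -
  define U W where "U = of_iv (v (m - 1))" and "W = of_iv (v 0)"
  have m0: "0 < m" and last: "m - 1 \<noteq> m" "\<not> m < m - 1"
    using m by simp_all
  have UW: "det2r U W = 1"
    using fan_last_det[OF fan] by (simp add: U_def W_def)
  have last_cone: "fan_open_cone m v (m - 1) = open_cone2 U W"
    using m by (simp add: fan_open_cone_def U_def W_def)
  have new_cone: "fan_open_cone (Suc m) ?v i =
      (if i < m - 1 then fan_open_cone m v i else if i = m - 1 then open_cone2 U (U + W)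
       else open_cone2 (U + W) W)" if "i < Suc m" for i
  proof (cases rule: fun_upd_last_consecutive_cases[OF m0 that, where v = v and p = "v (m - 1) + v 0"])
    case 1
    then show ?thesis
      by (simp add: fan_open_cone_def)
  next
    case 2
    then show ?thesis
      by (simp add: fan_open_cone_def U_def W_def of_iv_add)
  next
    case 3
    then show ?thesis
      unfolding fan_open_cone_def using last by (simp add: U_def W_def of_iv_add)
  qed
  show ?thesis
  proof (rule complete_nonsingular_fan2I)
    have "inj_on ?v {..<m}"
      using fan by (simp add: complete_nonsingular_fan2_def inj_on_def)
    moreover have "?v m \<notin> ?v ` {..<m}"
      using fan_sum_not_ray[OF fan] by auto
    ultimately show "inj_on ?v {..<Suc m}"
      by (simp add: lessThan_Suc)
    show "det2 (?v i) (?v (Suc i mod Suc m)) = 1" if "i < Suc m" for i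
      using fan_det[OF fan, of i] fan_last_det[OF fan]
      by (cases rule: fun_upd_last_consecutive_cases[OF m0 that, where v = v and p = "v (m - 1) + v 0"])
        (simp_all add: det2_def algebra_simps)
    show "\<exists>i<Suc m. x \<in> cone2 (of_iv (?v i)) (of_iv (?v (Suc i mod Suc m)))" for x
    proof -
      obtain k where k: "k < m" "x \<in> cone2 (of_iv (v k)) (of_iv (v (Suc k mod m)))"
        using fan_cover[OF fan] .
      show ?thesis
      proof (cases "k < m - 1")
        case True
        then show ?thesis
          using k by (intro exI[of _ k]) auto
      next
        case False
        then have "k = m - 1"
          using k by simp
        then have "x \<in> cone2 U W"
          using k m by (simp add: U_def W_def)
        then consider "x \<in> cone2 U (U + W)" | "x \<in> cone2 (U + W) W"
          using cone2_subdivide[OF UW] by blast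
        then show ?thesis
        proof cases
          case 1
          moreover have "m - 1 \<noteq> m" "Suc (m - 1) mod Suc m = m"
            using m by simp_all
          ultimately show ?thesis
            by (intro exI[of _ "m - 1"]) (simp add: U_def W_def of_iv_add)
        next
          case 2
          then show ?thesis
            using m by (intro exI[of _ m]) (simp add: U_def W_def of_iv_add)
        qed
      qed
    qed
    show "fan_open_cone (Suc m) ?v i \<inter> fan_open_cone (Suc m) ?v j = {}"
      if ij: "i < Suc m" "j < Suc m" "i \<noteq> j" for i j
    proof (cases "min i (m - 1) = min j (m - 1)")
      case True
      then have "{i, j} = {m - 1, m}"
        using ij m by (auto simp: min_def split: if_splits)
      then show ?thesis
        using new_cone[OF ij(1)] new_cone[OF ij(2)] m open_cone2_subdivide(3)[of U W]
        by (auto simp: doubleton_eq_iff)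
    next
      case False
      moreover have "min i (m - 1) < m" "min j (m - 1) < m"
        using m by auto
      ultimately have "fan_open_cone m v (min i (m - 1)) \<inter> fan_open_cone m v (min j (m - 1)) = {}"
        by (intro fan_open_cones_disjoint[OF fan])
      moreover have "fan_open_cone (Suc m) ?v k \<subseteq> fan_open_cone m v (min k (m - 1))"
        if "k < Suc m" for k
        using new_cone[OF that] last_cone open_cone2_subdivide(1,2)[of U W] by (auto simp: min_def)
      ultimately show ?thesis
        using ij by blast
    qed
  qed
qed

definition triangle_rays :: "nat \<Rightarrow> int \<times> int" where
  "triangle_rays k = (if k = 0 then (1, 0) else if k = 1 then (0, 1) else (- 1, - 1))"

definition square_rays :: "nat \<Rightarrow> int \<times> int" where
  "square_rays k = (if k = 0 then (1, 0) else if k = 1 then (0, 1) else if k = 2 then (- 1, 0) else (0, - 1))"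

lemma fan_triangle: "complete_nonsingular_fan2 3 triangle_rays"
proof (rule complete_nonsingular_fan2I)
  have "{..<3} = {0, 1, 2 :: nat}"
    by (auto elim: less_3_cases)
  then show "inj_on triangle_rays {..<3}"
    by (simp add: triangle_rays_def)
  show "det2 (triangle_rays i) (triangle_rays (Suc i mod 3)) = 1" if "i < 3" for i
    using that by (elim less_3_cases) (simp_all add: triangle_rays_def det2_def)
  show "\<exists>i<3. x \<in> cone2 (of_iv (triangle_rays i)) (of_iv (triangle_rays (Suc i mod 3)))" for x
  proof -
    have "x \<in> cone2 (1, 0) (0, 1) \<or> x \<in> cone2 (0, 1) (- 1, - 1) \<or> x \<in> cone2 (- 1, - 1) (1, 0)"
      by (cases x) (simp add: cone2_iff det2r_def, linarith)
    then show ?thesis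
      unfolding numeral_3_eq_3 Ex_less_Suc2 by (simp add: triangle_rays_def of_iv_def)
  qed
  show "fan_open_cone 3 triangle_rays i \<inter> fan_open_cone 3 triangle_rays j = {}"
    if "i < 3" "j < 3" "i \<noteq> j" for i j
    using that unfolding fan_open_cone_def open_cone2_def
    by (elim less_3_cases) (auto simp: triangle_rays_def of_iv_def det2r_def)
qed

lemma fan_square: "complete_nonsingular_fan2 4 square_rays"
proof (rule complete_nonsingular_fan2I)
  have "{..<4} = {0, 1, 2, 3 :: nat}"
    by (auto elim: less_4_cases)
  then show "inj_on square_rays {..<4}"
    by (simp add: square_rays_def)
  show "det2 (square_rays i) (square_rays (Suc i mod 4)) = 1" if "i < 4" for i
    using that by (elim less_4_cases) (simp_all add: square_rays_def det2_def)
  show "\<exists>i<4. x \<in> cone2 (of_iv (square_rays i)) (of_iv (square_rays (Suc i mod 4)))" for x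
  proof -
    have "x \<in> cone2 (1, 0) (0, 1) \<or> x \<in> cone2 (0, 1) (- 1, 0) \<or> x \<in> cone2 (- 1, 0) (0, - 1)
        \<or> x \<in> cone2 (0, - 1) (1, 0)"
      by (cases x) (simp add: cone2_iff det2r_def, linarith)
    moreover have "(4 :: nat) = Suc 3"
      by simp
    ultimately show ?thesis
      by (simp only: Ex_less_Suc2 numeral_3_eq_3) (simp add: square_rays_def of_iv_def)
  qed
  show "fan_open_cone 4 square_rays i \<inter> fan_open_cone 4 square_rays j = {}"
    if "i < 4" "j < 4" "i \<noteq> j" for i j
    using that unfolding fan_open_cone_def open_cone2_def
    by (elim less_4_cases) (auto simp: square_rays_def of_iv_def det2r_def)
qed

section \<open>Fans with rays alternating modulo 2\<close>

definition smult2 :: "int \<Rightarrow> int \<times> int \<Rightarrow> int \<times> int" where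
  "smult2 k p = (k * fst p, k * snd p)"

definition sqnorm2 :: "int \<times> int \<Rightarrow> int" where
  "sqnorm2 p = fst p ^ 2 + snd p ^ 2"

lemma det2_swap: "det2 a b = - det2 b a"
  and det2_self: "det2 a a = 0"
  and det2_minus_right: "det2 a (- b) = - det2 a b"
  and det2_add_right: "det2 a (b + c) = det2 a b + det2 a c"
  and det2_smult2_right: "det2 a (smult2 k b) = k * det2 a b"
  by (simp_all add: det2_def smult2_def algebra_simps)

lemma det2_plucker: "det2 a b * det2 u c + det2 b c * det2 u a + det2 c a * det2 u b = 0"
  by (simp add: det2_def algebra_simps)

lemma det2_parallel:
  assumes "det2 x u = 0" "det2 y u = 0" "u \<noteq> 0"
  shows "det2 x y = 0"
proof -
  have "fst u * det2 x y = 0" "snd u * det2 x y = 0"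
    using assms(1,2) unfolding det2_def by algebra+
  then show ?thesis
    using assms(3) by (auto simp: prod_eq_iff)
qed

lemma det2_three_term:
  assumes "det2 a b = 1" "det2 b c = 1"
  shows "a + c = smult2 (det2 a c) b"
proof -
  obtain a1 a2 b1 b2 c1 c2 where "a = (a1, a2)" "b = (b1, b2)" "c = (c1, c2)"
    by (metis prod.exhaust)
  moreover have "a1 + c1 = a1 * (b1 * c2 - b2 * c1) + c1 * (a1 * b2 - a2 * b1)"
    "a2 + c2 = a2 * (b1 * c2 - b2 * c1) + c2 * (a1 * b2 - a2 * b1)"
    using assms calculation by (simp_all add: det2_def)
  ultimately show ?thesis
    by (simp add: det2_def smult2_def algebra_simps)
qed

lemma even_of_equal_parity:
  assumes "mod2 a = mod2 c" "mod2 b \<noteq> (False, False)" "a + c = smult2 s b"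
  shows "even s"
proof -
  have "fst a + fst c = s * fst b" "snd a + snd c = s * snd b"
    using assms(3) by (simp_all add: smult2_def prod_eq_iff)
  moreover have "even (fst a + fst c)" "even (snd a + snd c)"
    using assms(1) by (auto simp: mod2_def)
  ultimately have "even (s * fst b)" "even (s * snd b)"
    by simp_all
  then show ?thesis
    using assms(2) by (auto simp: mod2_def)
qed

lemma sum_eq_0_if_middle_longest:
  assumes "det2 a b = 1" "det2 b c = 1" "sqnorm2 a \<le> sqnorm2 b" "sqnorm2 c \<le> sqnorm2 b"
    and "even (det2 a c)"
  shows "a + c = 0"
proof (rule ccontr)
  assume nz: "a + c \<noteq> 0"
  define d where "d = det2 a c"
  have sum: "a + c = smult2 d b"
    unfolding d_def by (rule det2_three_term[OF assms(1,2)])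
  then have "d \<noteq> 0"
    using nz by (auto simp: smult2_def zero_prod_def)
  moreover have "even d"
    using assms(5) by (simp add: d_def)
  ultimately have "2 \<le> \<bar>d\<bar>"
    by presburger
  then have "4 \<le> d ^ 2"
    using power_mono[of 2 "\<bar>d\<bar>" 2] by simp
  moreover have "sqnorm2 (a + c) = d ^ 2 * sqnorm2 b"
    unfolding sum by (simp add: sqnorm2_def smult2_def power_mult_distrib algebra_simps)
  moreover have "sqnorm2 (a + c) + sqnorm2 (a - c) = 2 * sqnorm2 a + 2 * sqnorm2 c"
    by (simp add: sqnorm2_def power2_eq_square algebra_simps)
  moreover have "0 \<le> sqnorm2 b" "0 \<le> sqnorm2 (a - c)"
    by (simp_all add: sqnorm2_def)
  ultimately have "sqnorm2 (a - c) = 0"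
    using assms(3,4) mult_right_mono[of 4 "d ^ 2" "sqnorm2 b"] by linarith
  then have "a = c"
    by (simp add: sqnorm2_def prod_eq_iff)
  then show False
    using assms(1,2) det2_swap[of a b] by simp
qed

lemma no_positive_even_recurrence:
  fixes h a :: "nat \<Rightarrow> int"
  assumes "3 \<le> n" "h 0 = 0" "h n = 0"
    and pos: "\<And>i. 0 < i \<Longrightarrow> i < n \<Longrightarrow> 0 < h i"
    and rec: "\<And>i. i + 2 \<le> n \<Longrightarrow> h i + h (i + 2) = a i * h (i + 1)"
    and even: "\<And>i. even (a i)"
  shows False
proof -
  have nonneg: "0 \<le> h i" if "i \<le> n" for i
    using that pos[of i] assms(2,3) by (cases "i = 0 \<or> i = n") auto
  define H where "H = Max (h ` {..n})"
  have le_H: "h i \<le> H" if "i \<le> n" for i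
    using that by (simp add: H_def)
  have "H \<in> h ` {..n}"
    unfolding H_def by (intro Max_in) auto
  then have ex_max: "\<exists>i. i \<le> n \<and> h i = H"
    by auto
  define q where "q = (LEAST i. i \<le> n \<and> h i = H)"
  have q: "q \<le> n" "h q = H"
    using LeastI_ex[OF ex_max] by (simp_all add: q_def)
  have below_q: "h i < H" if "i < q" for i
    using not_less_Least[of i "\<lambda>i. i \<le> n \<and> h i = H"] that q le_H[of i] by (simp add: q_def)
  have "0 < H"
    using pos[of 1] le_H[of 1] assms(1) by simp
  then have "h 0 \<noteq> H" "h n \<noteq> H"
    using assms(2,3) by simp_all
  then have "q \<noteq> 0" "q \<noteq> n"
    using q(2) by (metis, metis)
  define p where "p = q - 1"
  have p: "q = p + 1" "p + 2 \<le> n"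
    using q(1) \<open>q \<noteq> 0\<close> \<open>q \<noteq> n\<close> by (simp_all add: p_def)
  have sum: "h p + h (p + 2) = a p * H"
    using rec[OF p(2)] p q by simp
  have "h p < H" "h (p + 2) \<le> H" "0 \<le> h p" "0 \<le> h (p + 2)"
    using below_q[of p] le_H[OF p(2)] nonneg[of p] nonneg[OF p(2)] p by simp_all
  then have "0 \<le> a p * H" "a p * H < 2 * H"
    using sum by linarith+
  then have "0 \<le> a p" "a p < 2"
    using \<open>0 < H\<close> by (simp_all add: zero_le_mult_iff mult_less_cancel_right)
  then have "a p = 0"
    using even[of p] by presburger
  then have "h p = 0" "h (p + 2) = 0"
    using sum \<open>0 \<le> h p\<close> \<open>0 \<le> h (p + 2)\<close> by simp_all
  then show False
    using pos[of p] pos[of "p + 2"] p assms(1) by linarith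
qed

lemma fan_opposite_rays_nonpos:
  assumes fan: "complete_nonsingular_fan2 m v" and m: "3 \<le> m" and opp: "v 0 + v 2 = 0"
    and k: "2 \<le> k" "k < m"
  shows "det2 (v 0) (v k) \<le> 0"
proof (rule ccontr)
  assume "\<not> ?thesis"
  then have pos: "0 < det2 (v 0) (v k)" by simp
  \<comment> \<open>Points of cone k close to v k would lie in the interior of cone 0 or of cone 1.\<close>
  define u mid q where "u = of_iv (v 0)" and "mid = of_iv (v 1)" and "q = of_iv (v (Suc k mod m))"
  have v2: "v 2 = - v 0"
    using opp by (simp add: eq_neg_iff_add_eq_0 add.commute)
  have cone0: "fan_open_cone m v 0 = open_cone2 u mid" and cone1: "fan_open_cone m v 1 = open_cone2 mid (- u)"
    using m v2 by (simp_all add: fan_open_cone_def u_def mid_def of_iv_minus numeral_2_eq_2)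
  have "det2 (v 1) (v 2) = 1"
    using fan_det[OF fan, of 1] m by (simp add: numeral_2_eq_2)
  then have "v 1 \<noteq> 0"
    by (auto simp: det2_def)
  moreover have "det2 (v k) (v (Suc k mod m)) = 1"
    using fan_det[OF fan k(2)] .
  ultimately have "det2 (v k) (v 1) \<noteq> 0 \<or> det2 (v (Suc k mod m)) (v 1) \<noteq> 0"
    using det2_parallel[of "v k" "v 1" "v (Suc k mod m)"] by auto
  then have "eventually (\<lambda>t. det2r (of_iv (v k)) mid + t * det2r q mid \<noteq> 0) (at_right 0)"
    by (intro eventually_affine_nonzero) (simp add: mid_def q_def)
  moreover have "eventually (\<lambda>t. 0 < t \<and> 0 < det2r u (of_iv (v k)) + t * det2r u q) (at_right 0)"
    using pos by (intro eventually_conj eventually_at_right_less eventually_affine_pos) (simp add: u_def)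
  ultimately have "eventually (\<lambda>t. det2r (of_iv (v k)) mid + t * det2r q mid \<noteq> 0 \<and>
      0 < t \<and> 0 < det2r u (of_iv (v k)) + t * det2r u q) (at_right 0)"
    by (rule eventually_conj)
  then obtain t where sign: "det2r (of_iv (v k)) mid + t * det2r q mid \<noteq> 0"
    and t: "0 < t" "0 < det2r u (of_iv (v k)) + t * det2r u q"
    using eventually_happens'[OF trivial_limit_at_right_real] by blast
  define z where "z = of_iv (v k) + t *\<^sub>R q"
  have "det2r z mid \<noteq> 0" "0 < det2r u z"
    using sign t by (simp_all add: z_def det2r_simps)
  moreover have "det2r z (- u) = det2r u z" "det2r mid z = - det2r z mid"
    by (simp_all add: det2r_def)
  ultimately have "z \<in> fan_open_cone m v 0 \<or> z \<in> fan_open_cone m v 1"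
    unfolding cone0 cone1 open_cone2_def by auto
  moreover have "z \<in> fan_open_cone m v k"
    unfolding z_def q_def by (rule fan_shifted_ray_in_open_cone[OF fan k(2) t(1)])
  moreover have "fan_open_cone m v k \<inter> fan_open_cone m v 0 = {}"
    "fan_open_cone m v k \<inter> fan_open_cone m v 1 = {}"
    using k m by (simp_all add: fan_open_cones_disjoint[OF fan])
  ultimately show False
    by blast
qed

lemma fan_opposite_rays_neg:
  assumes fan: "complete_nonsingular_fan2 m v" and m: "3 \<le> m" and opp: "v 0 + v 2 = 0"
    and k: "3 \<le> k" "k < m"
  shows "det2 (v 0) (v k) < 0"
proof (rule ccontr)
  assume "\<not> ?thesis"
  then have zero: "det2 (v 0) (v k) = 0"
    using fan_opposite_rays_nonpos[OF fan m opp, of k] k by simp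
  define k' where "k' = Suc k mod m"
  have pred: "det2 (v (k - 1)) (v k) = 1" and succ: "det2 (v k) (v k') = 1"
    using fan_det[OF fan, of "k - 1"] fan_det[OF fan k(2)] k by (simp_all add: k'_def)
  have "det2 (v 0) (v k') \<le> 0"
  proof (cases "Suc k < m")
    case True
    then show ?thesis
      using fan_opposite_rays_nonpos[OF fan m opp, of "Suc k"] k by (simp add: k'_def)
  next
    case False
    then have "Suc k = m"
      using k by simp
    then have "k' = 0"
      by (simp add: k'_def)
    then show ?thesis
      by (simp add: det2_self)
  qed
  moreover have "det2 (v 0) (v (k - 1)) \<le> 0"
    using fan_opposite_rays_nonpos[OF fan m opp, of "k - 1"] k by simp
  moreover have "det2 (v 0) (v k') + det2 (v 0) (v (k - 1)) = 0"
    using det2_plucker[of "v (k - 1)" "v k" "v 0" "v k'"] pred succ zero by simp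
  ultimately have "det2 (v (k - 1)) (v 0) = 0" "det2 (v k) (v 0) = 0"
    using zero det2_swap[of "v 0" "v (k - 1)"] det2_swap[of "v 0" "v k"] by simp_all
  moreover have "v 0 \<noteq> 0"
    using fan_det[OF fan, of 0] m by (auto simp: det2_def)
  ultimately show False
    using det2_parallel[of "v (k - 1)" "v 0" "v k"] pred by simp
qed

lemma no_fan_with_opposite_rays_and_even_steps:
  assumes fan: "complete_nonsingular_fan2 m v" and m: "5 \<le> m" and opp: "v 0 + v 2 = 0"
    and even: "\<And>k. even (det2 (v (k mod m)) (v ((k + 2) mod m)))"
  shows False
proof -
  \<comment> \<open>the heights of v 2, ..., v m = v 0 on the negative side of the line through v 0\<close>
  define h where "h i = - det2 (v 0) (v ((i + 2) mod m))" for i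
  define a where "a i = det2 (v ((i + 2) mod m)) (v ((i + 4) mod m))" for i
  have "h 0 = - det2 (v 0) (v 2)"
    using m by (simp add: h_def numeral_2_eq_2)
  also have "v 2 = - v 0"
    using opp by (simp add: eq_neg_iff_add_eq_0 add.commute)
  finally have h_first: "h 0 = 0"
    by (simp add: det2_minus_right det2_self)
  have "Suc (Suc (m - 2)) = m"
    using m by simp
  then have h_last: "h (m - 2) = 0"
    by (simp add: h_def det2_self)
  have h_pos: "0 < h i" if "0 < i" "i < m - 2" for i
    using fan_opposite_rays_neg[OF fan _ opp, of "i + 2"] that m by (simp add: h_def)
  have a_even: "even (a i)" for i
    using even[of "i + 2"] by (simp add: a_def eval_nat_numeral)
  have h_rec: "h i + h (i + 2) = a i * h (i + 1)" for i
  proof -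
    have "det2 (v ((i + 2) mod m)) (v ((i + 3) mod m)) = 1" "det2 (v ((i + 3) mod m)) (v ((i + 4) mod m)) = 1"
      using fan_det_mod[OF fan, of "i + 2"] fan_det_mod[OF fan, of "i + 3"] by (simp_all add: eval_nat_numeral)
    from det2_three_term[OF this]
    have "det2 (v 0) (v ((i + 2) mod m) + v ((i + 4) mod m)) = a i * det2 (v 0) (v ((i + 3) mod m))"
      by (simp add: a_def det2_smult2_right eval_nat_numeral)
    then show ?thesis
      by (simp add: h_def det2_add_right eval_nat_numeral algebra_simps)
  qed
  show False
    by (rule no_positive_even_recurrence[of "m - 2" h a]) (use m h_first h_last h_pos h_rec a_even in auto)
qed

lemma no_fan_with_alternating_parity:
  assumes fan: "complete_nonsingular_fan2 m v" and m: "5 \<le> m"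
    and parity: "\<And>k. mod2 (v (k mod m)) = mod2 (v ((k + 2) mod m))"
    and nonzero: "\<And>k. k < m \<Longrightarrow> mod2 (v k) \<noteq> (False, False)"
  shows False
proof -
  have m0: "0 < m" and last: "m - 1 \<noteq> m" "\<not> m < m - 1"
    using m by simp_all
  have even: "even (det2 (v (k mod m)) (v ((k + 2) mod m)))" for k
  proof (rule even_of_equal_parity[OF parity nonzero])
    show "Suc k mod m < m"
      using m0 by simp
    have "det2 (v (k mod m)) (v (Suc k mod m)) = 1" "det2 (v (Suc k mod m)) (v ((k + 2) mod m)) = 1"
      using fan_det_mod[OF fan, of k] fan_det_mod[OF fan, of "Suc k"] by simp_all
    then show "v (k mod m) + v ((k + 2) mod m) =
        smult2 (det2 (v (k mod m)) (v ((k + 2) mod m))) (v (Suc k mod m))"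
      by (rule det2_three_term)
  qed
  obtain j where j: "j < m" "\<And>k. k < m \<Longrightarrow> sqnorm2 (v k) \<le> sqnorm2 (v j)"
  proof -
    have "Max (sqnorm2 ` v ` {..<m}) \<in> sqnorm2 ` v ` {..<m}"
      using m0 by (intro Max_in) auto
    then obtain j where "j < m" "sqnorm2 (v j) = Max (sqnorm2 ` v ` {..<m})"
      by auto
    then show thesis
      using that by simp
  qed
  \<comment> \<open>a longest ray moved to index 1\<close>
  define w where "w k = v ((k + (j + m - 1)) mod m)" for k
  have fan_w: "complete_nonsingular_fan2 m w"
    unfolding w_def by (rule fan_rotate[OF fan])
  have even_w: "even (det2 (w (k mod m)) (w ((k + 2) mod m)))" for k
    using even[of "k + (j + m - 1)"] by (simp add: w_def mod_add_left_eq ac_simps)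
  have "w 0 + w 2 = 0"
  proof (rule sum_eq_0_if_middle_longest)
    show "det2 (w 0) (w 1) = 1" "det2 (w 1) (w 2) = 1"
      using fan_det_mod[OF fan_w, of 0] fan_det_mod[OF fan_w, of 1] m by (simp_all add: numeral_2_eq_2)
    have "w 1 = v j"
      using j(1) m0 by (simp add: w_def)
    then show "sqnorm2 (w 0) \<le> sqnorm2 (w 1)" "sqnorm2 (w 2) \<le> sqnorm2 (w 1)"
      using j(2) m0 by (simp_all add: w_def)
    show "even (det2 (w 0) (w 2))"
      using even_w[of 0] m by (simp add: numeral_2_eq_2)
  qed
  then show False
    using no_fan_with_opposite_rays_and_even_steps[OF fan_w m _ even_w] by blast
qed

section \<open>The group GL(2, Z_2)\<close>

definition z2_add :: "z2vec \<Rightarrow> z2vec \<Rightarrow> z2vec" where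
  "z2_add x y = (fst x \<noteq> fst y, snd x \<noteq> snd y)"

lemma mod2_add: "mod2 (a + b) = z2_add (mod2 a) (mod2 b)"
  by (simp add: mod2_def z2_add_def)

lemma GL2Z2_add:
  assumes "g \<in> GL2Z2"
  shows "g (z2_add x y) = z2_add (g x) (g y)"
proof -
  obtain p q r s where "g = z2lin p q r s"
    using assms unfolding GL2Z2_def by blast
  then show ?thesis
    by (simp add: z2lin_def z2_add_def) argo
qed

lemma GL2Z2_inj:
  assumes "g \<in> GL2Z2"
  shows "inj g"
proof -
  obtain p q r s where g: "g = z2lin p q r s" "(p \<and> s) \<noteq> (q \<and> r)"
    using assms unfolding GL2Z2_def by blast
  show ?thesis
  proof (rule injI)
    fix x y assume "g x = g y"
    then show "x = y"
      using g(2) unfolding g(1) z2lin_def prod_eq_iff fst_conv snd_conv by argo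
  qed
qed

lemma nonzero_z2vec_iff: "x \<in> {va, vb, vc} \<longleftrightarrow> x \<noteq> (False, False)"
  by (cases x) (auto simp: va_def vb_def vc_def)

lemma GL2Z2_nonzero:
  assumes "g \<in> GL2Z2" "x \<in> {va, vb, vc}"
  shows "g x \<in> {va, vb, vc}"
proof -
  have "g (False, False) = (False, False)"
    using assms(1) unfolding GL2Z2_def z2lin_def by auto
  moreover have "g x \<noteq> g (False, False)"
    using assms(2) injD[OF GL2Z2_inj[OF assms(1)]] unfolding nonzero_z2vec_iff by metis
  ultimately show ?thesis
    unfolding nonzero_z2vec_iff by simp
qed

lemma third_nonzero_z2vec:
  assumes "x \<in> {va, vb, vc}" "y \<in> {va, vb, vc}" "z \<in> {va, vb, vc}" "x \<noteq> y" "y \<noteq> z" "x \<noteq> z"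
  shows "z = z2_add x y"
  using assms by (auto simp: va_def vb_def vc_def z2_add_def)

lemma z2lin_in_GL2Z2: "(p \<and> s) \<noteq> (q \<and> r) \<Longrightarrow> z2lin p q r s \<in> GL2Z2"
  unfolding GL2Z2_def by blast

lemma GL2Z2_transitive_on_pairs:
  assumes "x \<in> {va, vb, vc}" "y \<in> {va, vb, vc}" "x \<noteq> y"
  shows "\<exists>g\<in>GL2Z2. g x = va \<and> g y = vb"
proof -
  have "\<exists>p q r s. (p \<and> s) \<noteq> (q \<and> r) \<and> z2lin p q r s x = va \<and> z2lin p q r s y = vb"
  proof -
    consider "x = va" "y = vb" | "x = va" "y = vc" | "x = vb" "y = va" | "x = vb" "y = vc"
      | "x = vc" "y = va" | "x = vc" "y = vb"
      using assms by auto
    then show ?thesis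
    proof cases
      case 1
      then show ?thesis by (intro exI[of _ True] exI[of _ False] exI[of _ False] exI[of _ True])
        (simp add: z2lin_def va_def vb_def)
    next
      case 2
      then show ?thesis by (intro exI[of _ True] exI[of _ True] exI[of _ False] exI[of _ True])
        (simp add: z2lin_def va_def vb_def vc_def)
    next
      case 3
      then show ?thesis by (intro exI[of _ False] exI[of _ True] exI[of _ True] exI[of _ False])
        (simp add: z2lin_def va_def vb_def)
    next
      case 4
      then show ?thesis by (intro exI[of _ True] exI[of _ True] exI[of _ True] exI[of _ False])
        (simp add: z2lin_def va_def vb_def vc_def)
    next
      case 5
      then show ?thesis by (intro exI[of _ False] exI[of _ True] exI[of _ True] exI[of _ True])
        (simp add: z2lin_def va_def vb_def vc_def)
    next
      case 6
      then show ?thesis by (intro exI[of _ True] exI[of _ False] exI[of _ True] exI[of _ True])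
        (simp add: z2lin_def va_def vb_def vc_def)
    qed
  qed
  then obtain p q r s where "(p \<and> s) \<noteq> (q \<and> r)" "z2lin p q r s x = va" "z2lin p q r s y = vb"
    by (elim exE conjE)
  then show ?thesis
    by (intro bexI[of _ "z2lin p q r s"] conjI z2lin_in_GL2Z2)
qed

section \<open>Characteristic maps over P_m\<close>

lemma char_map_colour:
  "char_map m lam \<Longrightarrow> i < m \<Longrightarrow> lam i \<in> {va, vb, vc}"
  by (simp add: char_map_def)

lemma char_map_adjacent:
  "char_map m lam \<Longrightarrow> i < m \<Longrightarrow> lam i \<noteq> lam (Suc i mod m)"
  by (simp add: char_map_def)

lemma char_map_image: "char_map m lam \<Longrightarrow> lam ` {..<m} \<subseteq> {va, vb, vc}"
  unfolding char_map_def by blast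

lemma char_map_first_last:
  assumes "char_map m lam" "3 \<le> m"
  shows "lam (m - 1) \<noteq> lam 0" "lam 0 \<noteq> lam 1"
  using char_map_adjacent[OF assms(1), of "m - 1"] char_map_adjacent[OF assms(1), of 0] assms(2)
  by simp_all

lemma card_image_le_3:
  assumes "lam ` A \<subseteq> {va, vb, vc}"
  shows "card (lam ` A) \<le> 3"
proof -
  have "card (lam ` A) \<le> card {va, vb, vc}"
    using assms by (intro card_mono) simp_all
  also have "\<dots> = 3"
    by (simp add: va_def vb_def vc_def)
  finally show ?thesis .
qed

lemma card_image_le_2:
  assumes "lam ` A \<subseteq> {x, y}"
  shows "card (lam ` A) \<le> 2"
proof -
  have "card (lam ` A) \<le> card {x, y}"
    using assms by (intro card_mono) simp_all
  also have "\<dots> \<le> 2"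
    by (simp add: card_insert_if)
  finally show ?thesis .
qed

lemma char_map_alternating:
  assumes "char_map m lam" "\<And>i. i < m \<Longrightarrow> lam i \<in> {lam 0, lam 1}" "i < m"
  shows "lam i = (if even i then lam 0 else lam 1)"
  using assms(3)
proof (induction i)
  case (Suc i)
  then have "lam (Suc i) \<noteq> lam i"
    using char_map_adjacent[OF assms(1), of i] by simp
  then show ?case
    using Suc assms(2)[of "Suc i"] by auto
qed simp

lemma dj_equiv_alt_ab_even:
  assumes "char_map m lam" "3 \<le> m" "dj_equiv m lam alt_ab"
  shows "even m"
proof (rule ccontr)
  assume "odd m"
  obtain g where g: "g \<in> GL2Z2" "\<And>i. i < m \<Longrightarrow> alt_ab i = g (lam i)"
    using assms(3) unfolding dj_equiv_def by blast
  have "alt_ab (m - 1) = alt_ab 0"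
    using \<open>odd m\<close> assms(2) by (simp add: alt_ab_def)
  then have "g (lam (m - 1)) = g (lam 0)"
    using g(2)[of "m - 1"] g(2)[of 0] assms(2) by simp
  then show False
    using injD[OF GL2Z2_inj[OF g(1)]] char_map_first_last[OF assms(1,2)] by blast
qed

lemma dj_equiv_alt_ab_iff:
  assumes lam: "char_map m lam" and m: "3 \<le> m"
  shows "dj_equiv m lam alt_ab \<longleftrightarrow> card (lam ` {..<m}) \<noteq> 3"
proof
  assume "dj_equiv m lam alt_ab"
  then obtain g where g: "g \<in> GL2Z2" "\<And>i. i < m \<Longrightarrow> alt_ab i = g (lam i)"
    unfolding dj_equiv_def by blast
  have "lam i \<in> {lam 0, lam 1}" if "i < m" for i
  proof -
    have "g (lam i) \<in> {g (lam 0), g (lam 1)}"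
      using g(2)[OF that] g(2)[of 0] g(2)[of 1] m by (simp add: alt_ab_def split: if_splits)
    then show ?thesis
      using injD[OF GL2Z2_inj[OF g(1)]] by blast
  qed
  then have "lam ` {..<m} \<subseteq> {lam 0, lam 1}"
    by blast
  then show "card (lam ` {..<m}) \<noteq> 3"
    using card_image_le_2 by fastforce
next
  assume card: "card (lam ` {..<m}) \<noteq> 3"
  have two: "lam i \<in> {lam 0, lam 1}" if "i < m" for i
  proof (rule ccontr)
    assume "lam i \<notin> {lam 0, lam 1}"
    then have "card {lam 0, lam 1, lam i} = 3"
      using char_map_first_last[OF lam m] by (auto simp: card_insert_if)
    moreover have "{lam 0, lam 1, lam i} \<subseteq> lam ` {..<m}"
      using that m by auto
    ultimately have "3 \<le> card (lam ` {..<m})"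
      by (metis card_mono finite_imageI finite_lessThan)
    moreover have "card (lam ` {..<m}) \<le> 3"
      using char_map_image[OF lam] by (rule card_image_le_3)
    ultimately show False
      using card by simp
  qed
  obtain g where g: "g \<in> GL2Z2" "g (lam 0) = va" "g (lam 1) = vb"
    using GL2Z2_transitive_on_pairs[of "lam 0" "lam 1"] char_map_colour[OF lam] char_map_first_last[OF lam m] m
    by auto
  have "alt_ab i = g (lam i)" if "i < m" for i
    using char_map_alternating[OF lam two that] g by (simp add: alt_ab_def)
  then show "dj_equiv m lam alt_ab"
    unfolding dj_equiv_def using g(1) by blast
qed

lemma char_map_cyc_adjacent:
  assumes "char_map n lam" "i < n"
  shows "lam i \<noteq> lam (cyc_succ n i)" "lam (cyc_pred n i) \<noteq> lam i"
  using char_map_adjacent[OF assms] char_map_adjacent[OF assms(1) cyc_pred_less[of n i]]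
    cyc_succ_pred[OF assms(2)] assms(2)
  by (simp_all add: cyc_succ_def)

lemma char_map_distinct_neighbours:
  assumes lam: "char_map n lam" and three: "card (lam ` {..<n}) = 3"
  shows "\<exists>i<n. lam (cyc_pred n i) \<noteq> lam (cyc_succ n i)"
proof (rule ccontr)
  assume "\<not> (\<exists>i<n. lam (cyc_pred n i) \<noteq> lam (cyc_succ n i))"
  then have same: "lam (cyc_pred n i) = lam (cyc_succ n i)" if "i < n" for i
    using that by blast
  have "lam k \<in> {lam 0, lam 1}" if "k < n" for k
    using that
  proof (induction k rule: less_induct)
    case (less k)
    show ?case
    proof (cases "k < 2")
      case False
      define j where "j = k - 2"
      have k: "k = Suc (Suc j)"
        using False by (simp add: j_def)
      then have "lam k = lam j"
        using same[of "Suc j"] less.prems by (simp add: cyc_succ_eq cyc_pred_eq)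
      then show ?thesis
        using less k by simp
    qed (auto simp: less_2_cases_iff)
  qed
  then have "lam ` {..<n} \<subseteq> {lam 0, lam 1}"
    by blast
  then show False
    using card_image_le_2 three by fastforce
qed

lemma image_remove_repeated:
  assumes "j \<in> A" "j \<noteq> i" "f j = f i"
  shows "f ` (A - {i}) = f ` A"
proof
  show "f ` A \<subseteq> f ` (A - {i})"
  proof
    fix y assume "y \<in> f ` A"
    then obtain x where "x \<in> A" "y = f x"
      by blast
    show "y \<in> f ` (A - {i})"
    proof (cases "x = i")
      case True
      then show ?thesis
        using assms \<open>y = f x\<close> by (intro image_eqI[of _ f j]) auto
    next
      case False
      then show ?thesis
        using \<open>x \<in> A\<close> \<open>y = f x\<close> by blast
    qed
  qed
qed blast

lemma char_map_repeated_colour: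
  assumes n: "4 \<le> n" and lam: "char_map n lam" and three: "card (lam ` {..<n}) = 3"
  shows "\<exists>i j. i < n \<and> lam (cyc_pred n i) \<noteq> lam (cyc_succ n i) \<and> j < n \<and> j \<noteq> i \<and> lam j = lam i"
proof (rule ccontr)
  assume none: "\<not> ?thesis"
  have unique: "lam j \<noteq> lam i"
    if "i < n" "lam (cyc_pred n i) \<noteq> lam (cyc_succ n i)" "j < n" "j \<noteq> i" for i j
    using none that by blast
  have n0: "0 < n"
    using n by simp
  obtain i where i: "i < n" "lam (cyc_pred n i) \<noteq> lam (cyc_succ n i)"
    using char_map_distinct_neighbours[OF lam three] by blast
  define a b where "a = cyc_pred n i" and "b = cyc_succ n i"
  have ab: "a < n" "b < n" "cyc_succ n a = i" "cyc_pred n b = i"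
    using cyc_succ_pred cyc_pred_succ i(1) cyc_pred_less cyc_succ_less n0 by (simp_all add: a_def b_def)
  have unique_b: "lam j \<noteq> lam b" if "j < n" "j \<noteq> b" for j
  proof (rule unique[OF ab(2) _ that])
    have "cyc_succ n b \<noteq> i"
      using cyc_neighbours_distinct(2)[OF n i(1)] by (simp add: b_def)
    then have "lam (cyc_succ n b) \<noteq> lam i"
      by (rule unique[OF i cyc_succ_less[OF n0]])
    then show "lam (cyc_pred n b) \<noteq> lam (cyc_succ n b)"
      unfolding ab(4) by (rule not_sym)
  qed
  have unique_a: "lam j \<noteq> lam a" if "j < n" "j \<noteq> a" for j
  proof (rule unique[OF ab(1) _ that])
    have "cyc_pred n a \<noteq> i"
      using cyc_neighbours_distinct(4)[OF n i(1)] by (simp add: a_def)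
    then show "lam (cyc_pred n a) \<noteq> lam (cyc_succ n a)"
      unfolding ab(3) by (rule unique[OF i cyc_pred_less[OF n0]])
  qed
  define c where "c = cyc_succ n b"
  have "c < n" "c \<noteq> a" "c \<noteq> i" "c \<noteq> b"
    using cyc_succ_less[OF n0] cyc_neighbours_distinct[OF n i(1)] cyc_neighbours_distinct(1)[OF n ab(2)]
    by (simp_all add: c_def a_def b_def)
  then have "lam c \<noteq> lam a" "lam c \<noteq> lam i"
    using unique_a unique[OF i] by simp_all
  moreover have "lam a \<noteq> lam i" "lam i \<noteq> lam b" "lam a \<noteq> lam b"
    using char_map_cyc_adjacent[OF lam i(1)] i(2) by (simp_all add: a_def b_def)
  ultimately have "lam c = z2_add (lam a) (lam i)" "lam b = z2_add (lam a) (lam i)"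
    using char_map_colour[OF lam] \<open>c < n\<close> ab i(1)
    by (intro third_nonzero_z2vec; simp)+
  then show False
    using unique_b \<open>c < n\<close> \<open>c \<noteq> b\<close> by simp
qed

lemma char_map_deletable_vertex:
  assumes "4 \<le> n" "char_map n lam" "card (lam ` {..<n}) = 3"
  obtains i where "i < n" "lam (cyc_pred n i) \<noteq> lam (cyc_succ n i)"
    "card (lam ` ({..<n} - {i})) = 3"
proof -
  obtain i j where i: "i < n" "lam (cyc_pred n i) \<noteq> lam (cyc_succ n i)"
    and j: "j < n" "j \<noteq> i" "lam j = lam i"
    using char_map_repeated_colour[OF assms] by blast
  have "lam ` ({..<n} - {i}) = lam ` {..<n}"
    using j by (simp add: image_remove_repeated)
  then show thesis
    using that[OF i] assms(3) by simp
qed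

lemma char_map_rotate:
  assumes "0 < m" "char_map m lam"
  shows "char_map m (\<lambda>k. lam ((k + s) mod m))"
  using assms unfolding char_map_def rotate_mod_Suc by simp

lemma char_map_butlast:
  assumes lam: "char_map (Suc m) lam" and ends: "lam (m - 1) \<noteq> lam 0"
  shows "char_map m lam"
  unfolding char_map_def
proof (intro conjI allI impI)
  fix k assume k: "k < m"
  then show "lam k \<in> {va, vb, vc}"
    using char_map_colour[OF lam] by simp
  show "lam k \<noteq> lam (Suc k mod m)"
  proof (cases "Suc k < m")
    case True
    then show ?thesis
      using char_map_adjacent[OF lam, of k] k by simp
  next
    case False
    then have "Suc k = m"
      using k by simp
    then have "k = m - 1" "Suc k mod m = 0"
      by simp_all
    then show ?thesis
      using ends by simp
  qed
qed

section \<open>Real toric characteristic maps\<close>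

lemma real_toricI:
  assumes "complete_nonsingular_fan2 m v" "g \<in> GL2Z2" "\<And>i. i < m \<Longrightarrow> mod2 (v i) = g (lam i)"
  shows "real_toric m lam"
  unfolding real_toric_def dj_equiv_def using assms by metis

lemma real_toricE:
  assumes "real_toric m lam"
  obtains v g where "complete_nonsingular_fan2 m v" "g \<in> GL2Z2" "\<And>i. i < m \<Longrightarrow> mod2 (v i) = g (lam i)"
  using assms unfolding real_toric_def dj_equiv_def by metis

lemma real_toric_rotate:
  assumes m: "0 < m" and toric: "real_toric m (\<lambda>k. lam ((k + s) mod m))"
  shows "real_toric m lam"
proof -
  obtain v g where fan: "complete_nonsingular_fan2 m v" and g: "g \<in> GL2Z2"
    and v: "\<And>i. i < m \<Longrightarrow> mod2 (v i) = g (lam ((i + s) mod m))"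
    using real_toricE[OF toric] by blast
  define t where "t = (m - 1) * s"
  have undo_rotation: "((i + t) mod m + s) mod m = i" if "i < m" for i
  proof -
    have "((i + t) mod m + s) mod m = (i + t + s) mod m"
      by (simp add: mod_add_left_eq)
    also have "i + t + s = i + s * m"
      using m by (cases m) (simp_all add: t_def algebra_simps)
    finally show ?thesis
      using that by simp
  qed
  have "complete_nonsingular_fan2 m (\<lambda>i. v ((i + t) mod m))"
    by (rule fan_rotate[OF fan])
  moreover have "mod2 (v ((i + t) mod m)) = g (lam i)" if "i < m" for i
    using v[of "(i + t) mod m"] undo_rotation[OF that] m by simp
  ultimately show ?thesis
    by (rule real_toricI[OF _ g])
qed

lemma real_toric_subdivide_last:
  assumes toric: "real_toric m lam" and m: "3 \<le> m" and lam: "char_map (Suc m) lam"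
    and ends: "lam (m - 1) \<noteq> lam 0"
  shows "real_toric (Suc m) lam"
proof -
  obtain v g where fan: "complete_nonsingular_fan2 m v" and g: "g \<in> GL2Z2"
    and v: "\<And>i. i < m \<Longrightarrow> mod2 (v i) = g (lam i)"
    using real_toricE[OF toric] by blast
  have "lam (m - 1) \<noteq> lam m" "lam m \<noteq> lam 0"
    using char_map_adjacent[OF lam, of "m - 1"] char_map_adjacent[OF lam, of m] m by simp_all
  then have "lam m = z2_add (lam (m - 1)) (lam 0)"
    using ends char_map_colour[OF lam] m by (intro third_nonzero_z2vec) auto
  then have "mod2 (v (m - 1) + v 0) = g (lam m)"
    using v[of "m - 1"] v[of 0] m by (simp add: mod2_add GL2Z2_add[OF g])
  then have "mod2 ((v(m := v (m - 1) + v 0)) i) = g (lam i)" if "i < Suc m" for i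
    using v that by (cases "i = m") simp_all
  then show ?thesis
    by (rule real_toricI[OF fan_subdivide_last[OF fan m] g])
qed

lemma real_toric_triangle:
  assumes lam: "char_map 3 lam"
  shows "real_toric 3 lam"
proof -
  have colours: "lam 0 \<in> {va, vb, vc}" "lam 1 \<in> {va, vb, vc}" "lam 2 \<in> {va, vb, vc}"
    using char_map_colour[OF lam] by simp_all
  have distinct: "lam 0 \<noteq> lam 1" "lam 1 \<noteq> lam 2" "lam 2 \<noteq> lam 0"
    using char_map_adjacent[OF lam, of 0] char_map_adjacent[OF lam, of 1] char_map_adjacent[OF lam, of 2]
    by (simp_all add: numeral_2_eq_2)
  obtain g where g: "g \<in> GL2Z2" "g (lam 0) = va" "g (lam 1) = vb"
    using GL2Z2_transitive_on_pairs[OF colours(1,2) distinct(1)] by (elim bexE conjE)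
  have "g (lam 2) \<noteq> g (lam 0)" "g (lam 2) \<noteq> g (lam 1)"
    using distinct injD[OF GL2Z2_inj[OF g(1)]] by metis+
  then have "g (lam 2) = vc"
    using GL2Z2_nonzero[OF g(1) colours(3)] g(2,3) by auto
  then have "mod2 (triangle_rays i) = g (lam i)" if "i < 3" for i
    using that g by (elim less_3_cases) (simp_all add: triangle_rays_def mod2_def va_def vb_def vc_def)
  then show ?thesis
    by (rule real_toricI[OF fan_triangle g(1)])
qed

lemma real_toric_if_three_colours:
  assumes "3 \<le> m" "char_map m lam" "card (lam ` {..<m}) = 3"
  shows "real_toric m lam"
  using assms
proof (induction m arbitrary: lam rule: nat_induct_at_least)
  case base
  then show ?case
    by (intro real_toric_triangle)
next
  case (Suc m)
  obtain i where i: "i < Suc m" "lam (cyc_pred (Suc m) i) \<noteq> lam (cyc_succ (Suc m) i)"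
    "card (lam ` ({..<Suc m} - {i})) = 3"
    using char_map_deletable_vertex[of "Suc m" lam] Suc by auto
  define lam' where "lam' k = lam ((k + Suc i) mod Suc m)" for k
  have lam': "char_map (Suc m) lam'"
    unfolding lam'_def by (rule char_map_rotate) (use Suc in auto)
  have "m - 1 + Suc i = i + Suc m - 1"
    using Suc.hyps by simp
  then have ends: "lam' (m - 1) \<noteq> lam' 0"
    using i(2) by (simp add: lam'_def cyc_pred_def cyc_succ_def add.commute)
  have "lam' ` {..<m} = lam ` ({..<Suc m} - {i})"
    unfolding lam'_def rotate_mod_image_remove[OF i(1), symmetric] by (simp add: image_image)
  then have "real_toric m lam'"
    using Suc.IH[OF char_map_butlast[OF lam' ends]] i(3) by simp
  then have "real_toric (Suc m) lam'"
    using Suc.hyps lam' ends by (intro real_toric_subdivide_last)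
  then show ?case
    unfolding lam'_def by (rule real_toric_rotate[rotated]) simp
qed

lemma real_toric_square:
  assumes "dj_equiv 4 lam alt_ab"
  shows "real_toric 4 lam"
proof -
  obtain g where g: "g \<in> GL2Z2" "\<And>i. i < 4 \<Longrightarrow> alt_ab i = g (lam i)"
    using assms unfolding dj_equiv_def by blast
  have "mod2 (square_rays i) = alt_ab i" if "i < 4" for i
    using that by (elim less_4_cases) (simp_all add: square_rays_def mod2_def alt_ab_def va_def vb_def)
  then show ?thesis
    using g(2) by (intro real_toricI[OF fan_square g(1)]) simp
qed

lemma not_real_toric_alternating:
  assumes lam: "char_map m lam" and m: "5 \<le> m" and alt: "dj_equiv m lam alt_ab"
  shows "\<not> real_toric m lam"
proof
  assume "real_toric m lam"
  then obtain v h where fan: "complete_nonsingular_fan2 m v" and h: "h \<in> GL2Z2"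
    and v: "\<And>i. i < m \<Longrightarrow> mod2 (v i) = h (lam i)"
    using real_toricE by blast
  obtain g where g: "g \<in> GL2Z2" "\<And>i. i < m \<Longrightarrow> alt_ab i = g (lam i)"
    using alt unfolding dj_equiv_def by blast
  have "even m"
    using dj_equiv_alt_ab_even[OF lam _ alt] m by simp
  show False
  proof (rule no_fan_with_alternating_parity[OF fan m])
    fix k
    have "even (k mod m) \<longleftrightarrow> even ((k + 2) mod m)"
      using \<open>even m\<close> by (simp add: dvd_mod_iff)
    then have "alt_ab (k mod m) = alt_ab ((k + 2) mod m)"
      by (simp add: alt_ab_def)
    then have "g (lam (k mod m)) = g (lam ((k + 2) mod m))"
      using g(2)[of "k mod m"] g(2)[of "(k + 2) mod m"] m by simp
    then have "lam (k mod m) = lam ((k + 2) mod m)"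
      using injD[OF GL2Z2_inj[OF g(1)]] by blast
    then show "mod2 (v (k mod m)) = mod2 (v ((k + 2) mod m))"
      using v m by simp
  next
    fix k assume "k < m"
    then have "h (lam k) \<in> {va, vb, vc}"
      by (intro GL2Z2_nonzero[OF h] char_map_colour[OF lam])
    then have "h (lam k) \<noteq> (False, False)"
      unfolding nonzero_z2vec_iff .
    then show "mod2 (v k) \<noteq> (False, False)"
      using v[OF \<open>k < m\<close>] by simp
  qed
qed

theorem lemma5:
  fixes m :: nat and lam :: "nat \<Rightarrow> z2vec"
  assumes "m \<ge> 3" and "char_map m lam"
  shows "(real_toric m lam \<longleftrightarrow>
            ((m = 4 \<and> dj_equiv m lam alt_ab) \<or> card (lam ` {..<m}) = 3))
       \<and> (real_toric m lam \<longleftrightarrow>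
            \<not> (\<exists>k\<ge>3. m = 2 * k \<and> dj_equiv m lam alt_ab))"
proof (cases "dj_equiv m lam alt_ab")
  case True
  then have "card (lam ` {..<m}) \<noteq> 3" "even m"
    using dj_equiv_alt_ab_iff[OF assms(2,1)] dj_equiv_alt_ab_even[OF assms(2,1)] by simp_all
  moreover have "real_toric m lam \<longleftrightarrow> m = 4"
  proof
    assume "real_toric m lam"
    then have "\<not> 5 \<le> m"
      using not_real_toric_alternating[OF assms(2) _ True] by blast
    then show "m = 4"
      using \<open>even m\<close> assms(1) by presburger
  next
    assume "m = 4"
    then show "real_toric m lam"
      using real_toric_square True by simp
  qed
  ultimately show ?thesis
    using True assms(1) by auto presburger+
next
  case False
  then show ?thesis
    using dj_equiv_alt_ab_iff[OF assms(2,1)] real_toric_if_three_colours[OF assms(1,2)] by auto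
qed

end
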